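(* Let $X=Y\cup Z$ where $Y\cap Z=\emptyset$, $Z$ is a $\sigma$-compact subspace of $X$ and $Y$ is a closed discrete subset of $X$. If $X$ is absolutely strongly star-Lindelöf and $|Y|<\mathfrak{d}$, then $X$ is selectively strongly star-Menger.
   Context: All spaces are regular. $St(A,\mathcal{U})=\bigcup\{U\in\mathcal{U}:U\cap A\neq\emptyset\}$. $\mathfrak{d}$ is the dominating number. $X$ is absolutely strongly star-Lindelöf if for every open cover $\mathcal{U}$ and every dense $D\subseteq X$ there is a countable $C\subseteq D$ with $St(C,\mathcal{U})=X$. $X$ is selectively strongly star-Menger if for every sequence $(\mathcal{U}_n:n\in\omega)$ of open covers and every sequence $(D_n:n\in\omega)$ of dense subsets there are finite $F_n\subseteq D_n$ with $\{St(F_n,\mathcal{U}_n):n\in\omega\}$ covering $X$. *)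

theory Defs
  imports "HOL-Analysis.Analysis" "HOL-Library.Equipollence"
begin

definition star :: "'a set \<Rightarrow> 'a set set \<Rightarrow> 'a set" where
  "star A \<U> = \<Union>{U \<in> \<U>. U \<inter> A \<noteq> {}}"

definition open_cover :: "'a topology \<Rightarrow> 'a set set \<Rightarrow> bool" where
  "open_cover X \<U> \<longleftrightarrow> (\<forall>U\<in>\<U>. openin X U) \<and> \<Union>\<U> = topspace X"

definition dense_in :: "'a topology \<Rightarrow> 'a set \<Rightarrow> bool" where
  "dense_in X D \<longleftrightarrow> D \<subseteq> topspace X \<and> X closure_of D = topspace X"

definition absolutely_strongly_star_Lindelof :: "'a topology \<Rightarrow> bool" where
  "absolutely_strongly_star_Lindelof X \<longleftrightarrow>
     (\<forall>\<U> D. open_cover X \<U> \<and> dense_in X D \<longrightarrow>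
        (\<exists>C. C \<subseteq> D \<and> countable C \<and> star C \<U> = topspace X))"

definition selectively_strongly_star_Menger :: "'a topology \<Rightarrow> bool" where
  "selectively_strongly_star_Menger X \<longleftrightarrow>
     (\<forall>\<U> :: nat \<Rightarrow> 'a set set. \<forall>D :: nat \<Rightarrow> 'a set.
        (\<forall>n. open_cover X (\<U> n)) \<and> (\<forall>n. dense_in X (D n)) \<longrightarrow>
        (\<exists>F :: nat \<Rightarrow> 'a set. (\<forall>n. finite (F n) \<and> F n \<subseteq> D n) \<and>
              (\<Union>n. star (F n) (\<U> n)) = topspace X))"

definition dominating_family :: "(nat \<Rightarrow> nat) set \<Rightarrow> bool" where
  "dominating_family F \<longleftrightarrow> (\<forall>g. \<exists>f\<in>F. \<forall>\<^sub>F n in sequentially. g n \<le> f n)"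

text \<open>The cardinality of S is below the dominating number d, i.e. strictly
  below the cardinality of every dominating family.\<close>
definition card_less_dominating :: "'a set \<Rightarrow> bool" where
  "card_less_dominating S \<longleftrightarrow> (\<forall>F. dominating_family F \<longrightarrow> S \<prec> F)"

definition sigma_compact_in :: "'a topology \<Rightarrow> 'a set \<Rightarrow> bool" where
  "sigma_compact_in X Z \<longleftrightarrow> (\<exists>K :: nat \<Rightarrow> 'a set. (\<forall>n. compactin X (K n)) \<and> Z = (\<Union>n. K n))"

definition closed_discrete_in :: "'a topology \<Rightarrow> 'a set \<Rightarrow> bool" where
  "closed_discrete_in X Y \<longleftrightarrow> closedin X Y \<and>
     (\<forall>y\<in>Y. \<exists>U. openin X U \<and> U \<inter> Y = {y})"

end

theory Submission
  imports Defs
begin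

text \<open>The \<sigma>-compact part is handled by compactness: each compact piece is covered by
  finitely many members of \<U> meeting the dense set.  For the part of size below \<open>\<d>\<close>,
  enumerate the countable sets \<open>C\<^sub>m \<subseteq> D\<^sub>m\<close> with \<open>St(C\<^sub>m, \<U>\<^sub>m) = X\<close> provided by absolute
  strong star-Lindel\<ouml>fness, and let \<open>f\<^sub>y(m)\<close> be the first index of a point of \<open>C\<^sub>m\<close>
  whose star contains y.  Fewer than \<open>\<d>\<close> functions \<open>f\<^sub>y\<close> do not dominate, so some g
  exceeds every \<open>f\<^sub>y\<close> infinitely often, and the first \<open>g(m) + 1\<close> points of \<open>C\<^sub>m\<close> do the
  job.  The two parts are combined on the even and odd indices.\<close>

lemma mem_star_iff: "x \<in> star A \<U> \<longleftrightarrow> (\<exists>V\<in>\<U>. x \<in> V \<and> V \<inter> A \<noteq> {})"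
  unfolding star_def by blast

lemma star_mono: "A \<subseteq> B \<Longrightarrow> star A \<U> \<subseteq> star B \<U>"
  unfolding star_def by blast

lemma star_subset_topspace: "open_cover X \<U> \<Longrightarrow> star A \<U> \<subseteq> topspace X"
  unfolding star_def open_cover_def by blast

lemma open_cover_openin: "open_cover X \<U> \<Longrightarrow> U \<in> \<U> \<Longrightarrow> openin X U"
  unfolding open_cover_def by blast

lemma dense_in_Int_openin: "dense_in X D \<Longrightarrow> openin X V \<Longrightarrow> V \<noteq> {} \<Longrightarrow> V \<inter> D \<noteq> {}"
  unfolding dense_in_def dense_intersects_open by blast

definition selectively_strongly_star_Menger_in :: "'a topology \<Rightarrow> 'a set \<Rightarrow> bool" where
  "selectively_strongly_star_Menger_in X A \<longleftrightarrow>
     (\<forall>\<U> :: nat \<Rightarrow> 'a set set. \<forall>D :: nat \<Rightarrow> 'a set.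
        (\<forall>n. open_cover X (\<U> n)) \<and> (\<forall>n. dense_in X (D n)) \<longrightarrow>
        (\<exists>F :: nat \<Rightarrow> 'a set. (\<forall>n. finite (F n) \<and> F n \<subseteq> D n) \<and>
              A \<subseteq> (\<Union>n. star (F n) (\<U> n))))"

lemma selectively_strongly_star_Menger_iff_in_topspace:
  "selectively_strongly_star_Menger X \<longleftrightarrow> selectively_strongly_star_Menger_in X (topspace X)"
proof -
  have eq: "(\<Union>n. star (F n) (\<U> n)) = topspace X \<longleftrightarrow> topspace X \<subseteq> (\<Union>n. star (F n) (\<U> n))"
    if "\<forall>n. open_cover X (\<U> n)" for \<U> :: "nat \<Rightarrow> 'a set set" and F
    using star_subset_topspace that by blast
  show ?thesis
    unfolding selectively_strongly_star_Menger_def selectively_strongly_star_Menger_in_def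
    by (simp add: eq)
qed

lemma selectively_strongly_star_Menger_in_Un:
  assumes A: "selectively_strongly_star_Menger_in X A"
    and B: "selectively_strongly_star_Menger_in X B"
  shows "selectively_strongly_star_Menger_in X (A \<union> B)"
  unfolding selectively_strongly_star_Menger_in_def
proof (intro allI impI)
  fix \<U> :: "nat \<Rightarrow> 'a set set" and D :: "nat \<Rightarrow> 'a set"
  assume UD: "(\<forall>n. open_cover X (\<U> n)) \<and> (\<forall>n. dense_in X (D n))"
  obtain F where F: "\<And>n. finite (F n) \<and> F n \<subseteq> D (2*n)"
    and AF: "A \<subseteq> (\<Union>n. star (F n) (\<U> (2*n)))"
    using A UD unfolding selectively_strongly_star_Menger_in_def
    by (elim allE[of _ "\<lambda>n. \<U> (2*n)"] allE[of _ "\<lambda>n. D (2*n)"]) blast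
  obtain G where G: "\<And>n. finite (G n) \<and> G n \<subseteq> D (2*n+1)"
    and BG: "B \<subseteq> (\<Union>n. star (G n) (\<U> (2*n+1)))"
    using B UD unfolding selectively_strongly_star_Menger_in_def
    by (elim allE[of _ "\<lambda>n. \<U> (2*n+1)"] allE[of _ "\<lambda>n. D (2*n+1)"]) blast
  define H where "H n = (if even n then F (n div 2) else G (n div 2))" for n
  have "finite (H n) \<and> H n \<subseteq> D n" for n
    using F[of "n div 2"] G[of "n div 2"] by (cases "even n") (auto simp: H_def elim: oddE)
  moreover have "A \<union> B \<subseteq> (\<Union>n. star (H n) (\<U> n))"
  proof
    fix x assume "x \<in> A \<union> B"
    then consider n where "x \<in> star (H (2*n)) (\<U> (2*n))" | n where "x \<in> star (H (2*n+1)) (\<U> (2*n+1))"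
      using AF BG by (auto simp: H_def)
    then show "x \<in> (\<Union>n. star (H n) (\<U> n))"
      by cases blast+
  qed
  ultimately show "\<exists>H. (\<forall>n. finite (H n) \<and> H n \<subseteq> D n) \<and> A \<union> B \<subseteq> (\<Union>n. star (H n) (\<U> n))"
    by blast
qed

lemma compactin_subset_star_finite:
  assumes K: "compactin X K" and U: "open_cover X \<U>" and D: "dense_in X D"
  obtains F where "finite F" "F \<subseteq> D" "K \<subseteq> star F \<U>"
proof -
  let ?V = "{V\<in>\<U>. V \<inter> D \<noteq> {}}"
  have "\<exists>\<V>. finite \<V> \<and> \<V> \<subseteq> ?V \<and> K \<subseteq> \<Union>\<V>"
  proof (rule compactinD[OF K])
    show "openin X V" if "V \<in> ?V" for V
      using open_cover_openin[OF U] that by blast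
    show "K \<subseteq> \<Union>?V"
    proof
      fix x assume "x \<in> K"
      then have "x \<in> \<Union>\<U>"
        using compactin_subset_topspace[OF K] U unfolding open_cover_def by blast
      then obtain V where V: "V \<in> \<U>" "x \<in> V"
        by blast
      then have "V \<inter> D \<noteq> {}"
        using dense_in_Int_openin[OF D open_cover_openin[OF U]] by blast
      with V show "x \<in> \<Union>?V"
        by blast
    qed
  qed
  then obtain \<V> where \<V>: "finite \<V>" "\<V> \<subseteq> ?V" "K \<subseteq> \<Union>\<V>"
    by blast
  have "\<forall>V\<in>\<V>. \<exists>d. d \<in> V \<inter> D"
    using \<V>(2) by blast
  then obtain pick where pick: "\<And>V. V \<in> \<V> \<Longrightarrow> pick V \<in> V \<inter> D"
    by metis
  show thesis
  proof
    show "finite (pick ` \<V>)" "pick ` \<V> \<subseteq> D"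
      using \<V>(1) pick by auto
    show "K \<subseteq> star (pick ` \<V>) \<U>"
    proof
      fix x assume "x \<in> K"
      then obtain V where V: "V \<in> \<V>" "x \<in> V"
        using \<V>(3) by blast
      then have "V \<in> \<U>" "pick V \<in> V \<inter> pick ` \<V>"
        using \<V>(2) pick by auto
      with V(2) show "x \<in> star (pick ` \<V>) \<U>"
        unfolding mem_star_iff by blast
    qed
  qed
qed

lemma sigma_compact_selectively_strongly_star_Menger_in:
  assumes "sigma_compact_in X Z"
  shows "selectively_strongly_star_Menger_in X Z"
  unfolding selectively_strongly_star_Menger_in_def
proof (intro allI impI)
  fix \<U> :: "nat \<Rightarrow> 'a set set" and D :: "nat \<Rightarrow> 'a set"
  assume UD: "(\<forall>n. open_cover X (\<U> n)) \<and> (\<forall>n. dense_in X (D n))"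
  obtain K :: "nat \<Rightarrow> 'a set" where K: "\<And>n. compactin X (K n)" and Z: "Z = (\<Union>n. K n)"
    using assms unfolding sigma_compact_in_def by blast
  have "\<exists>F. finite F \<and> F \<subseteq> D n \<and> K n \<subseteq> star F (\<U> n)" for n
  proof -
    have "open_cover X (\<U> n)" "dense_in X (D n)"
      using UD by auto
    then obtain F where "finite F" "F \<subseteq> D n" "K n \<subseteq> star F (\<U> n)"
      by (rule compactin_subset_star_finite[OF K])
    then show ?thesis by blast
  qed
  then obtain F where F: "\<And>n. finite (F n) \<and> F n \<subseteq> D n \<and> K n \<subseteq> star (F n) (\<U> n)"
    by metis
  have "Z \<subseteq> (\<Union>n. star (F n) (\<U> n))"
    unfolding Z using F by (intro UN_mono) auto
  with F show "\<exists>F. (\<forall>n. finite (F n) \<and> F n \<subseteq> D n) \<and> Z \<subseteq> (\<Union>n. star (F n) (\<U> n))"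
    by blast
qed

lemma card_less_dominating_not_dominated:
  assumes "card_less_dominating Y"
  obtains g :: "nat \<Rightarrow> nat" where "\<And>y. y \<in> Y \<Longrightarrow> \<exists>\<^sub>F m in sequentially. f y m < g m"
proof -
  have "\<not> dominating_family (f ` Y)"
  proof
    assume "dominating_family (f ` Y)"
    then have "Y \<prec> f ` Y"
      using assms unfolding card_less_dominating_def by blast
    then have "Y \<prec> Y"
      using image_lepoll lesspoll_trans2 by blast
    then show False
      using eqpoll_refl lesspoll_def by blast
  qed
  then obtain g where "\<And>y. y \<in> Y \<Longrightarrow> \<not> (\<forall>\<^sub>F m in sequentially. g m \<le> f y m)"
    unfolding dominating_family_def by blast
  then have "\<And>y. y \<in> Y \<Longrightarrow> \<exists>\<^sub>F m in sequentially. f y m < g m"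
    by (simp add: not_eventually not_le)
  then show thesis
    by (rule that)
qed

lemma star_from_nat_into:
  assumes "countable C" and "x \<in> star C \<U>"
  shows "\<exists>k. x \<in> star {from_nat_into C k} \<U>"
proof -
  obtain V d where V: "V \<in> \<U>" "x \<in> V" "d \<in> V" and "d \<in> C"
    using assms(2) unfolding mem_star_iff by blast
  obtain k where "from_nat_into C k = d"
    using from_nat_into_surj[OF assms(1) \<open>d \<in> C\<close>] by blast
  with V have "x \<in> star {from_nat_into C k} \<U>"
    unfolding mem_star_iff by blast
  then show ?thesis ..
qed

lemma card_less_dominating_selectively_strongly_star_Menger_in:
  assumes L: "absolutely_strongly_star_Lindelof X"
    and Y: "Y \<subseteq> topspace X" "card_less_dominating Y"
  shows "selectively_strongly_star_Menger_in X Y"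
  unfolding selectively_strongly_star_Menger_in_def
proof (intro allI impI)
  fix \<U> :: "nat \<Rightarrow> 'a set set" and D :: "nat \<Rightarrow> 'a set"
  assume UD: "(\<forall>n. open_cover X (\<U> n)) \<and> (\<forall>n. dense_in X (D n))"
  have "\<forall>m. \<exists>C. C \<subseteq> D m \<and> countable C \<and> star C (\<U> m) = topspace X"
    using L UD unfolding absolutely_strongly_star_Lindelof_def by blast
  then obtain C where C: "\<And>m. C m \<subseteq> D m" "\<And>m. countable (C m)"
    and starC: "\<And>m. star (C m) (\<U> m) = topspace X"
    by metis
  define c where "c m = from_nat_into (C m)" for m
  define f where "f y m = (LEAST k. y \<in> star {c m k} (\<U> m))" for y m
  have ex: "\<exists>k. y \<in> star {c m k} (\<U> m)" if "y \<in> Y" for y m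
  proof -
    have "y \<in> star (C m) (\<U> m)"
      using starC Y(1) that by blast
    then show ?thesis
      unfolding c_def by (rule star_from_nat_into[OF C(2)])
  qed
  have f: "y \<in> star {c m (f y m)} (\<U> m)" if "y \<in> Y" for y m
    unfolding f_def by (rule LeastI_ex[OF ex[OF that]])
  obtain g where g: "\<And>y. y \<in> Y \<Longrightarrow> \<exists>\<^sub>F m in sequentially. f y m < g m"
    using card_less_dominating_not_dominated[OF Y(2), of f] by blast
  define F where "F m = (if C m = {} then {} else c m ` {..g m})" for m
  have "c m k \<in> D m" if "C m \<noteq> {}" for m k
    using from_nat_into[OF that] C(1) unfolding c_def by blast
  then have "finite (F m) \<and> F m \<subseteq> D m" for m
    by (auto simp: F_def)
  moreover have "Y \<subseteq> (\<Union>m. star (F m) (\<U> m))"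
  proof
    fix y assume "y \<in> Y"
    then obtain m where m: "f y m < g m"
      using g frequently_ex by blast
    have "y \<in> star (C m) (\<U> m)"
      using starC Y(1) \<open>y \<in> Y\<close> by blast
    then have "C m \<noteq> {}"
      unfolding mem_star_iff by blast
    then have "{c m (f y m)} \<subseteq> F m"
      using m by (simp add: F_def)
    then have "y \<in> star (F m) (\<U> m)"
      using star_mono f[OF \<open>y \<in> Y\<close>, of m] by blast
    then show "y \<in> (\<Union>m. star (F m) (\<U> m))"
      by blast
  qed
  ultimately show "\<exists>F. (\<forall>m. finite (F m) \<and> F m \<subseteq> D m) \<and> Y \<subseteq> (\<Union>m. star (F m) (\<U> m))"
    by (intro exI[of _ F]) blast
qed

theorem mainTheorem6:
  fixes X :: "'a topology" and Y Z :: "'a set"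
  assumes "regular_space X" and "t1_space X"
    and "topspace X = Y \<union> Z" and "Y \<inter> Z = {}"
    and "sigma_compact_in X Z"
    and "closed_discrete_in X Y"
    and "absolutely_strongly_star_Lindelof X"
    and "card_less_dominating Y"
  shows "selectively_strongly_star_Menger X"
proof -
  have "Y \<subseteq> topspace X"
    using assms(3) by blast
  then have "selectively_strongly_star_Menger_in X Y"
    using card_less_dominating_selectively_strongly_star_Menger_in assms(7,8) by blast
  moreover have "selectively_strongly_star_Menger_in X Z"
    using sigma_compact_selectively_strongly_star_Menger_in assms(5) .
  ultimately show ?thesis
    unfolding selectively_strongly_star_Menger_iff_in_topspace assms(3)
    by (rule selectively_strongly_star_Menger_in_Un)
qed

end
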